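(* Let $d\geq1$, $q\geq1$, $0<\alpha<d$. Then there exists $C>0$ such that for every $a\in\mathbb{R}^d$ and every measurable function $u$ on $\mathbb{R}^d$, $$\int_0^\infty\left(\fint_{B_\rho(a)}|u(y)|\,dy\right)^q\rho^{(d-\alpha)q+d-1}\,d\rho\leq C\left\|\tfrac{1}{|x|^\alpha}\star|u|\right\|_{L^q(\mathbb{R}^d)}^q.$$
   Context: $B_\rho(a)$ is the open ball of radius $\rho$ centered at $a$, $\fint_{B}$ denotes the average over $B$ (integral divided by Lebesgue measure of $B$), and $\star$ denotes convolution. *)

theory Defs
  imports "HOL-Analysis.Analysis"
begin

definition epowr :: "ennreal \<Rightarrow> real \<Rightarrow> ennreal" where
  "epowr x q = (if x = \<infinity> then \<infinity> else ennreal (enn2real x powr q))"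

definition ball_avg :: "('a::euclidean_space \<Rightarrow> real) \<Rightarrow> 'a \<Rightarrow> real \<Rightarrow> ennreal" where
  "ball_avg u a \<rho> =
     (\<integral>\<^sup>+ y \<in> ball a \<rho>. ennreal \<bar>u y\<bar> \<partial>lebesgue) / emeasure lebesgue (ball a \<rho>)"

definition riesz_conv :: "real \<Rightarrow> ('a::euclidean_space \<Rightarrow> real) \<Rightarrow> 'a \<Rightarrow> ennreal" where
  "riesz_conv \<alpha> u x = (\<integral>\<^sup>+ y. ennreal (\<bar>u y\<bar> / norm (x - y) powr \<alpha>) \<partial>lebesgue)"

end

theory Submission
  imports Defs
begin

(* Spread the \<rho>-integrand uniformly over the annulus A\<^sub>\<rho> = {x. \<rho> \<le> |x - a| \<le> 2\<rho>}, whose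
   measure is c \<rho>\<^sup>d.  By Tonelli the left-hand side becomes an integral over x of an
   integral over \<rho> \<in> [r/2, r], where r = |x - a|.  For such \<rho> every point of B\<^sub>\<rho>(a) lies
   within 3\<rho> of x, so \<integral>\<^bsub>B\<^sub>\<rho>(a)\<^esub> |u| \<le> (3\<rho>)\<^sup>\<alpha> (|.|^(-\<alpha>) \<star> |u|)(x).  After this
   substitution all powers of \<rho> cancel except 1/\<rho>, which is at most 2/r on an interval
   of length r/2. *)

lemma borel_measurable_mono_ennreal:
  fixes f :: "real \<Rightarrow> ennreal"
  assumes "mono f"
  shows "f \<in> borel_measurable borel"
proof (rule borel_measurableI_greater)
  fix t
  have "is_interval {x. t < f x}"
    using assms unfolding is_interval_1 mono_def by (blast intro: less_le_trans)
  then show "{x \<in> space borel. t < f x} \<in> sets borel"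
    by (simp add: real_interval_borel_measurable)
qed

lemma borel_measurable_lebesgue_ident[measurable]:
  "(\<lambda>x::'a::euclidean_space. x) \<in> borel_measurable lebesgue"
  by (rule measurable_completion) simp

lemma sigma_finite_lebesgue: "sigma_finite_measure (lebesgue :: 'a::euclidean_space measure)"
proof
  obtain A :: "'a set set" where "countable A" "A \<subseteq> sets lborel" "\<Union>A = space lborel"
      "\<forall>a\<in>A. emeasure lborel a \<noteq> \<infinity>"
    using lborel.sigma_finite_countable by blast
  then show "\<exists>A::'a set set. countable A \<and> A \<subseteq> sets lebesgue \<and> \<Union>A = space lebesgue
      \<and> (\<forall>a\<in>A. emeasure lebesgue a \<noteq> \<infinity>)"
    by (intro exI[of _ A]) auto
qed

lemma measurable_epowr[measurable]:
  assumes [measurable]: "f \<in> borel_measurable M"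
  shows "(\<lambda>x. epowr (f x) q) \<in> borel_measurable M"
  unfolding epowr_def by measurable

lemma epowr_ennreal[simp]: "0 \<le> t \<Longrightarrow> epowr (ennreal t) q = ennreal (t powr q)"
  by (simp add: epowr_def)

lemma epowr_mono:
  assumes "x \<le> y" "0 \<le> q"
  shows "epowr x q \<le> epowr y q"
proof (cases "y = \<infinity>")
  case False
  with assms(1) have "enn2real x \<le> enn2real y"
    by (simp add: enn2real_mono top.not_eq_extremum)
  with assms False show ?thesis
    by (auto simp: epowr_def top_unique intro: ennreal_leI powr_mono2)
qed (simp add: epowr_def)

lemma epowr_ennreal_mult:
  assumes "0 \<le> c"
  shows "epowr (ennreal c * x) q = ennreal (c powr q) * epowr x q"
proof (cases x rule: ennreal_cases)
  case (real t)
  with assms have "ennreal c * x = ennreal (c * t)"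
    by (simp add: ennreal_mult')
  with real assms have "epowr (ennreal c * x) q = ennreal ((c * t) powr q)"
    by (metis epowr_ennreal mult_nonneg_nonneg)
  also have "\<dots> = ennreal (c powr q) * epowr x q"
    using real assms by (simp add: powr_mult ennreal_mult)
  finally show ?thesis .
next
  case top
  with assms show ?thesis
    by (cases "c = 0") (auto simp: epowr_def ennreal_mult_top)
qed

lemma borel_measurable_ball_avg[measurable]: "ball_avg u a \<in> borel_measurable borel"
proof -
  have [measurable]: "(\<lambda>\<rho>. \<integral>\<^sup>+ y \<in> ball a \<rho>. ennreal \<bar>u y\<bar> \<partial>lebesgue) \<in> borel_measurable borel"
    by (intro borel_measurable_mono_ennreal monoI nn_integral_mono) (auto split: split_indicator)
  have [measurable]: "(\<lambda>\<rho>. emeasure lebesgue (ball a \<rho>)) \<in> borel_measurable borel"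
    by (intro borel_measurable_mono_ennreal monoI emeasure_mono) auto
  show ?thesis
    unfolding ball_avg_def[abs_def] by measurable
qed

lemma borel_measurable_riesz_conv[measurable]:
  fixes u :: "'a::euclidean_space \<Rightarrow> real"
  assumes [measurable]: "u \<in> borel_measurable lebesgue"
  shows "riesz_conv \<alpha> u \<in> borel_measurable lebesgue"
proof -
  interpret lebesgue: sigma_finite_measure "lebesgue :: 'a measure"
    by (rule sigma_finite_lebesgue)
  show ?thesis
    unfolding riesz_conv_def[abs_def] by measurable
qed

lemma set_nn_integral_half_interval_le:
  fixes f :: "real \<Rightarrow> ennreal" and K r :: real
  assumes "0 \<le> K"
    and f_le: "\<And>\<rho>. r / 2 \<le> \<rho> \<Longrightarrow> \<rho> \<le> r \<Longrightarrow> 0 < \<rho> \<Longrightarrow> f \<rho> \<le> ennreal (K / \<rho>) * e"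
  shows "(\<integral>\<^sup>+\<rho>\<in>{r / 2..r}. f \<rho> \<partial>lborel) \<le> ennreal K * e"
proof (cases "0 < r")
  case True
  have "f \<rho> * indicator {r / 2..r} \<rho> \<le> ennreal (2 * K / r) * e * indicator {r / 2..r} \<rho>" for \<rho>
  proof (cases "\<rho> \<in> {r / 2..r}")
    case True
    with \<open>0 < r\<close> have "f \<rho> \<le> ennreal (K / \<rho>) * e"
      by (intro f_le) auto
    also have "\<dots> \<le> ennreal (2 * K / r) * e"
      using True \<open>0 < r\<close> \<open>0 \<le> K\<close> by (intro mult_right_mono ennreal_leI) (auto simp: field_simps mult_left_mono)
    finally show ?thesis
      using True by simp
  qed simp
  then have "(\<integral>\<^sup>+\<rho>\<in>{r / 2..r}. f \<rho> \<partial>lborel)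
      \<le> (\<integral>\<^sup>+\<rho>. ennreal (2 * K / r) * e * indicator {r / 2..r} \<rho> \<partial>lborel)"
    by (rule nn_integral_mono)
  also have "\<dots> = ennreal (2 * K / r) * e * ennreal (r / 2)"
    using True by (simp add: nn_integral_cmult_indicator)
  also have "\<dots> = ennreal K * e"
    using True \<open>0 \<le> K\<close> by (simp add: ennreal_mult'[symmetric] mult.commute mult.left_commute)
  finally show ?thesis .
next
  case False
  have "(\<integral>\<^sup>+\<rho>\<in>{r / 2..r}. f \<rho> \<partial>lborel) = (\<integral>\<^sup>+(\<rho>::real). 0 \<partial>lborel)"
    by (intro nn_integral_cong_AE)
      (use AE_lborel_singleton[of 0] False in \<open>auto elim!: eventually_mono simp: indicator_def\<close>)
  then show ?thesis
    by simp
qed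

definition annulus :: "'a::metric_space \<Rightarrow> real \<Rightarrow> 'a set" where
  "annulus a \<rho> = {x. \<rho> \<le> dist a x \<and> dist a x \<le> 2 * \<rho>}"

lemma mem_annulus[simp]: "x \<in> annulus a \<rho> \<longleftrightarrow> \<rho> \<le> dist a x \<and> dist a x \<le> 2 * \<rho>"
  by (simp add: annulus_def)

lemma annulus_eq_cball_diff_ball: "annulus a \<rho> = cball a (2 * \<rho>) - ball a \<rho>"
  by (auto simp: annulus_def)

lemma annulus_volume_const_pos: "0 < (2 ^ DIM('a) - 1) * measure lborel (ball (0::'a::euclidean_space) 1)"
  using one_less_power[of "2::real" "DIM('a)"] DIM_positive by (simp add: content_ball_pos)

lemma emeasure_annulus:
  fixes a :: "'a::euclidean_space"
  assumes "0 \<le> \<rho>"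
  shows "emeasure lborel (annulus a \<rho>)
    = ennreal ((2 ^ DIM('a) - 1) * measure lborel (ball (0::'a) 1) * \<rho> ^ DIM('a))"
proof -
  let ?\<omega> = "measure lborel (ball (0::'a) 1)"
  have ball: "emeasure lborel (ball a r) = ennreal (r ^ DIM('a) * ?\<omega>)" if "0 \<le> r" for r
    using emeasure_lborel_ball_finite[of a r] content_ball_conv_unit_ball[OF that, of a]
    by (simp add: emeasure_eq_ennreal_measure less_top)
  have "emeasure lborel (cball a r) = emeasure lborel (ball a r)" for r
    using emeasure_lborel_cball_finite[of a r] emeasure_lborel_ball_finite[of a r]
    by (simp add: emeasure_eq_ennreal_measure less_top content_cball_conv_ball)
  then have "emeasure lborel (annulus a \<rho>) = emeasure lborel (ball a (2 * \<rho>)) - emeasure lborel (ball a \<rho>)"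
    unfolding annulus_eq_cball_diff_ball
    using assms emeasure_lborel_ball_finite[of a \<rho>] by (subst emeasure_Diff) auto
  also have "\<dots> = ennreal ((2 * \<rho>) ^ DIM('a) * ?\<omega>) - ennreal (\<rho> ^ DIM('a) * ?\<omega>)"
    using assms by (simp only: ball)
  also have "\<dots> = ennreal ((2 ^ DIM('a) - 1) * ?\<omega> * \<rho> ^ DIM('a))"
    using assms by (subst ennreal_minus) (auto simp: power_mult_distrib algebra_simps)
  finally show ?thesis .
qed

lemma nn_integral_uniform_on_annulus:
  fixes a :: "'a::euclidean_space"
  assumes "0 < \<rho>"
  shows "(\<integral>\<^sup>+x. t / emeasure lborel (annulus a \<rho>) * indicator (annulus a \<rho>) x \<partial>lborel) = t"
proof -
  define m where "m = (2 ^ DIM('a) - 1) * measure lborel (ball (0::'a) 1) * \<rho> ^ DIM('a)"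
  have "0 < m"
    using assms annulus_volume_const_pos by (simp add: m_def)
  moreover have "emeasure lborel (annulus a \<rho>) = ennreal m"
    using assms by (simp add: emeasure_annulus m_def)
  ultimately have "t / emeasure lborel (annulus a \<rho>) * emeasure lborel (annulus a \<rho>) = t"
    by (simp add: ennreal_divide_times divide_ennreal)
  moreover have "annulus a \<rho> \<in> sets lborel"
    by (simp add: annulus_eq_cball_diff_ball)
  ultimately show ?thesis
    by (simp add: nn_integral_cmult_indicator)
qed

lemma nn_integral_average_over_annuli:
  fixes a :: "'a::euclidean_space" and g :: "real \<Rightarrow> ennreal"
  assumes [measurable]: "g \<in> borel_measurable borel"
  shows "(\<integral>\<^sup>+\<rho>\<in>{0<..}. g \<rho> \<partial>lborel)
    = (\<integral>\<^sup>+x. (\<integral>\<^sup>+\<rho>\<in>{dist a x / 2..dist a x}. g \<rho> / emeasure lborel (annulus a \<rho>) \<partial>lborel)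
        \<partial>lebesgue)"
proof -
  define c where "c = (2 ^ DIM('a) - 1) * measure lborel (ball (0::'a) 1)"
  define G where "G x \<rho> = (if 0 < \<rho> \<and> x \<in> annulus a \<rho> then g \<rho> / emeasure lborel (annulus a \<rho>) else 0)"
    for x \<rho>
  have "case_prod G = (\<lambda>(x, \<rho>). if 0 < \<rho> \<and> \<rho> \<le> dist a x \<and> dist a x \<le> 2 * \<rho>
                                  then g \<rho> / ennreal (c * \<rho> ^ DIM('a)) else 0)"
    by (auto simp: fun_eq_iff G_def emeasure_annulus c_def)
  then have G_measurable: "case_prod G \<in> borel_measurable (lborel \<Otimes>\<^sub>M lborel)"
    by simp
  have "indicator {0<..} \<rho> * g \<rho> = (\<integral>\<^sup>+x. G x \<rho> \<partial>lborel)" for \<rho>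
  proof (cases "0 < \<rho>")
    case True
    have "(\<integral>\<^sup>+x. G x \<rho> \<partial>lborel)
        = (\<integral>\<^sup>+x. g \<rho> / emeasure lborel (annulus a \<rho>) * indicator (annulus a \<rho>) x \<partial>lborel)"
      using True by (intro nn_integral_cong) (simp add: G_def indicator_def)
    also have "\<dots> = g \<rho>"
      using True by (rule nn_integral_uniform_on_annulus)
    finally show ?thesis
      using True by simp
  qed (simp add: G_def)
  then have "(\<integral>\<^sup>+\<rho>\<in>{0<..}. g \<rho> \<partial>lborel) = (\<integral>\<^sup>+\<rho>. (\<integral>\<^sup>+x. G x \<rho> \<partial>lborel) \<partial>lborel)"
    by (simp add: mult.commute)
  also have "\<dots> = (\<integral>\<^sup>+x. (\<integral>\<^sup>+\<rho>. G x \<rho> \<partial>lborel) \<partial>lebesgue)"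
    unfolding nn_integral_completion by (rule lborel_pair.Fubini'[OF G_measurable])
  also have "\<dots> = (\<integral>\<^sup>+x. (\<integral>\<^sup>+\<rho>\<in>{dist a x / 2..dist a x}.
      g \<rho> / emeasure lborel (annulus a \<rho>) \<partial>lborel) \<partial>lebesgue)"
  proof (intro nn_integral_cong_AE)
    \<comment> \<open>At x = a the slices differ: the right one puts the value g 0 / 0 on the null set {0}.\<close>
    show "AE x in lebesgue. (\<integral>\<^sup>+\<rho>. G x \<rho> \<partial>lborel)
      = (\<integral>\<^sup>+\<rho>\<in>{dist a x / 2..dist a x}. g \<rho> / emeasure lborel (annulus a \<rho>) \<partial>lborel)"
      using AE_completion[OF AE_lborel_singleton[of a]]
    proof eventually_elim
      case (elim x)
      define r where "r = dist a x"
      have "0 < r"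
        using elim by (simp add: r_def)
      then show ?case
        unfolding G_def mem_annulus r_def[symmetric]
        by (intro nn_integral_cong) (auto simp: indicator_def)
    qed
  qed
  finally show ?thesis .
qed

lemma ball_nn_integral_le_riesz_conv:
  fixes a x :: "'a::euclidean_space" and u :: "'a \<Rightarrow> real"
  assumes [measurable]: "u \<in> borel_measurable lebesgue" and "\<rho> \<le> dist a x" "0 \<le> \<alpha>"
  shows "(\<integral>\<^sup>+y\<in>ball a \<rho>. ennreal \<bar>u y\<bar> \<partial>lebesgue)
    \<le> ennreal ((dist a x + \<rho>) powr \<alpha>) * riesz_conv \<alpha> u x"
proof -
  let ?c = "(dist a x + \<rho>) powr \<alpha>"
  have "ennreal \<bar>u y\<bar> * indicator (ball a \<rho>) y \<le> ennreal ?c * ennreal (\<bar>u y\<bar> / norm (x - y) powr \<alpha>)"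
    for y
  proof (cases "y \<in> ball a \<rho>")
    case True
    then have "0 < norm (x - y)" "norm (x - y) \<le> dist a x + \<rho>"
      using assms(2) dist_triangle[of x y a] by (auto simp: dist_norm norm_minus_commute)
    then have "norm (x - y) powr \<alpha> \<le> ?c" "0 < norm (x - y) powr \<alpha>"
      using assms(3) by (auto intro: powr_mono2)
    then have "\<bar>u y\<bar> \<le> ?c * (\<bar>u y\<bar> / norm (x - y) powr \<alpha>)"
      by (simp add: field_simps mult_left_mono)
    then show ?thesis
      using True by (simp add: ennreal_mult'[symmetric] ennreal_leI)
  qed simp
  then have "(\<integral>\<^sup>+y\<in>ball a \<rho>. ennreal \<bar>u y\<bar> \<partial>lebesgue)
      \<le> (\<integral>\<^sup>+y. ennreal ?c * ennreal (\<bar>u y\<bar> / norm (x - y) powr \<alpha>) \<partial>lebesgue)"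
    by (rule nn_integral_mono)
  also have "\<dots> = ennreal ?c * riesz_conv \<alpha> u x"
    unfolding riesz_conv_def by (rule nn_integral_cmult) measurable
  finally show ?thesis .
qed

lemma ball_avg_le_riesz_conv:
  fixes a x :: "'a::euclidean_space" and u :: "'a \<Rightarrow> real"
  assumes [measurable]: "u \<in> borel_measurable lebesgue"
    and "0 \<le> \<alpha>" "0 < \<rho>" "x \<in> annulus a \<rho>"
  shows "ball_avg u a \<rho>
    \<le> ennreal (3 powr \<alpha> / measure lborel (ball (0::'a) 1) * \<rho> powr (\<alpha> - DIM('a))) * riesz_conv \<alpha> u x"
proof -
  let ?\<omega> = "measure lborel (ball (0::'a) 1)"
  have "0 < ?\<omega>"
    by (simp add: content_ball_pos)
  have "emeasure lebesgue (ball a \<rho>) = ennreal (?\<omega> * \<rho> ^ DIM('a))"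
    using assms(3) emeasure_lebesgue_ball_conv_unit_ball[of \<rho> a] emeasure_lborel_ball_finite[of "0::'a" 1]
    by (simp add: emeasure_eq_ennreal_measure ennreal_mult' mult.commute)
  moreover have "(\<integral>\<^sup>+y\<in>ball a \<rho>. ennreal \<bar>u y\<bar> \<partial>lebesgue)
      \<le> ennreal ((3 * \<rho>) powr \<alpha>) * riesz_conv \<alpha> u x"
  proof -
    have "(\<integral>\<^sup>+y\<in>ball a \<rho>. ennreal \<bar>u y\<bar> \<partial>lebesgue)
        \<le> ennreal ((dist a x + \<rho>) powr \<alpha>) * riesz_conv \<alpha> u x"
      using assms by (intro ball_nn_integral_le_riesz_conv) auto
    also have "\<dots> \<le> ennreal ((3 * \<rho>) powr \<alpha>) * riesz_conv \<alpha> u x"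
      using assms by (intro mult_right_mono ennreal_leI powr_mono2) auto
    finally show ?thesis .
  qed
  ultimately have "ball_avg u a \<rho>
      \<le> riesz_conv \<alpha> u x * ennreal ((3 * \<rho>) powr \<alpha>) / ennreal (?\<omega> * \<rho> ^ DIM('a))"
    unfolding ball_avg_def by (auto intro: divide_right_mono_ennreal simp: mult.commute)
  also have "\<dots> = ennreal ((3 * \<rho>) powr \<alpha> / (?\<omega> * \<rho> ^ DIM('a))) * riesz_conv \<alpha> u x"
    using \<open>0 < ?\<omega>\<close> assms(3) by (simp add: ennreal_times_divide[symmetric] divide_ennreal mult.commute)
  also have "(3 * \<rho>) powr \<alpha> / (?\<omega> * \<rho> ^ DIM('a)) = 3 powr \<alpha> / ?\<omega> * \<rho> powr (\<alpha> - DIM('a))"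
    using assms(3) by (simp add: powr_mult powr_diff powr_realpow)
  finally show ?thesis .
qed

lemma powr_radial_weight_cancel:
  fixes k c \<rho> \<alpha> q :: real and n :: nat
  assumes "0 < \<rho>" "0 < k" "0 < c"
  shows "(k * \<rho> powr (\<alpha> - n)) powr q * (\<rho> powr ((n - \<alpha>) * q + n - 1) / (c * \<rho> ^ n))
    = k powr q / c / \<rho>"
proof -
  have "(k * \<rho> powr (\<alpha> - n)) powr q * \<rho> powr ((n - \<alpha>) * q + n - 1)
      = k powr q * \<rho> powr ((\<alpha> - n) * q + ((n - \<alpha>) * q + n - 1))"
    using assms by (simp add: powr_mult powr_powr powr_add)
  also have "\<dots> = k powr q * (\<rho> ^ n / \<rho>)"
    using assms by (simp add: algebra_simps powr_diff powr_realpow)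
  finally show ?thesis
    using assms by (simp add: field_simps)
qed

lemma annulus_integrand_le:
  fixes a x :: "'a::euclidean_space" and u :: "'a \<Rightarrow> real" and \<alpha> q \<rho> :: real
  assumes [measurable]: "u \<in> borel_measurable lebesgue"
    and "0 \<le> \<alpha>" "0 \<le> q" "0 < \<rho>" "x \<in> annulus a \<rho>"
  defines "\<omega> \<equiv> measure lborel (ball (0::'a) 1)"
  shows "epowr (ball_avg u a \<rho>) q * ennreal (\<rho> powr ((DIM('a) - \<alpha>) * q + DIM('a) - 1))
      / emeasure lborel (annulus a \<rho>)
    \<le> ennreal ((3 powr \<alpha> / \<omega>) powr q / ((2 ^ DIM('a) - 1) * \<omega>) / \<rho>) * epowr (riesz_conv \<alpha> u x) q"
proof -
  let ?n = "DIM('a)" and ?E = "epowr (riesz_conv \<alpha> u x) q"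
  define k where "k = 3 powr \<alpha> / \<omega>"
  define c where "c = (2 ^ ?n - 1) * \<omega>"
  define w where "w = \<rho> powr ((?n - \<alpha>) * q + ?n - 1) / (c * \<rho> ^ ?n)"
  have "0 < \<omega>" "0 < c"
    using annulus_volume_const_pos by (simp_all add: \<omega>_def c_def content_ball_pos)
  then have "0 < k" "0 \<le> w"
    using assms(4) by (simp_all add: k_def w_def)
  have "ennreal (\<rho> powr ((?n - \<alpha>) * q + ?n - 1)) / emeasure lborel (annulus a \<rho>) = ennreal w"
    using assms(4) \<open>0 < c\<close> unfolding w_def c_def \<omega>_def
    by (simp add: emeasure_annulus divide_ennreal)
  then have "epowr (ball_avg u a \<rho>) q * ennreal (\<rho> powr ((?n - \<alpha>) * q + ?n - 1))
      / emeasure lborel (annulus a \<rho>) = epowr (ball_avg u a \<rho>) q * ennreal w"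
    by (metis ennreal_times_divide)
  also have "\<dots> \<le> epowr (ennreal (k * \<rho> powr (\<alpha> - ?n)) * riesz_conv \<alpha> u x) q * ennreal w"
    using assms unfolding k_def \<omega>_def
    by (intro mult_right_mono epowr_mono ball_avg_le_riesz_conv) auto
  also have "\<dots> = ennreal ((k * \<rho> powr (\<alpha> - ?n)) powr q) * ?E * ennreal w"
    using \<open>0 < k\<close> by (subst epowr_ennreal_mult) simp_all
  also have "\<dots> = ennreal ((k * \<rho> powr (\<alpha> - ?n)) powr q * w) * ?E"
    using \<open>0 \<le> w\<close> by (simp add: ennreal_mult' mult_ac)
  also have "(k * \<rho> powr (\<alpha> - ?n)) powr q * w = k powr q / c / \<rho>"
    unfolding w_def using assms(4) \<open>0 < k\<close> \<open>0 < c\<close> by (rule powr_radial_weight_cancel)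
  finally show ?thesis
    by (simp add: k_def c_def)
qed

theorem lemma2p3:
  fixes q \<alpha> :: real
  assumes "q \<ge> 1" and "0 < \<alpha>" and "\<alpha> < real DIM('a::euclidean_space)"
  shows "\<exists>C>0. \<forall>(a::'a) (u::'a \<Rightarrow> real). u \<in> borel_measurable lebesgue \<longrightarrow>
           (\<integral>\<^sup>+ \<rho> \<in> {0<..}. epowr (ball_avg u a \<rho>) q
               * ennreal (\<rho> powr ((real DIM('a) - \<alpha>) * q + real DIM('a) - 1)) \<partial>lborel)
           \<le> ennreal C * (\<integral>\<^sup>+ x. epowr (riesz_conv \<alpha> u x) q \<partial>lebesgue)"
proof -
  define \<omega> where "\<omega> = measure lborel (ball (0::'a) 1)"
  define K where "K = (3 powr \<alpha> / \<omega>) powr q / ((2 ^ DIM('a) - 1) * \<omega>)"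
  have "0 < K"
    using annulus_volume_const_pos by (simp add: K_def \<omega>_def content_ball_pos)
  show ?thesis
  proof (intro exI[of _ K] conjI allI impI \<open>0 < K\<close>)
    fix a :: 'a and u :: "'a \<Rightarrow> real"
    assume [measurable]: "u \<in> borel_measurable lebesgue"
    let ?g = "\<lambda>\<rho>. epowr (ball_avg u a \<rho>) q * ennreal (\<rho> powr ((real DIM('a) - \<alpha>) * q + real DIM('a) - 1))"
    have "(\<integral>\<^sup>+\<rho>\<in>{0<..}. ?g \<rho> \<partial>lborel)
        = (\<integral>\<^sup>+x. (\<integral>\<^sup>+\<rho>\<in>{dist a x / 2..dist a x}.
            ?g \<rho> / emeasure lborel (annulus a \<rho>) \<partial>lborel) \<partial>lebesgue)"
      by (rule nn_integral_average_over_annuli) measurable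
    also have "\<dots> \<le> (\<integral>\<^sup>+x. ennreal K * epowr (riesz_conv \<alpha> u x) q \<partial>lebesgue)"
    proof (intro nn_integral_mono set_nn_integral_half_interval_le)
      show "0 \<le> K"
        using \<open>0 < K\<close> by simp
      fix x \<rho>
      assume "dist a x / 2 \<le> \<rho>" "\<rho> \<le> dist a x" "0 < \<rho>"
      then show "?g \<rho> / emeasure lborel (annulus a \<rho>) \<le> ennreal (K / \<rho>) * epowr (riesz_conv \<alpha> u x) q"
        unfolding K_def \<omega>_def using assms by (intro annulus_integrand_le) auto
    qed
    also have "\<dots> = ennreal K * (\<integral>\<^sup>+x. epowr (riesz_conv \<alpha> u x) q \<partial>lebesgue)"
      by (rule nn_integral_cmult) measurable
    finally show "(\<integral>\<^sup>+\<rho>\<in>{0<..}. ?g \<rho> \<partial>lborel)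
        \<le> ennreal K * (\<integral>\<^sup>+x. epowr (riesz_conv \<alpha> u x) q \<partial>lebesgue)" .
  qed
qed

end
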